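(* Let $\mathbf{r}'=(r'_0,\dots,r'_{2^m-1})\in GF(2^m)^{2^m}$ be arbitrary, and let $f(x)\in GF(2^m)[x]$ be the unique polynomial of degree less than $2^m$ with $f(\omega_j)=r'_j$ for all $0\le j\le 2^m-1$ (equivalently $f(x)=\sum_{j=0}^{2^m-1} r'_j\, s_m(x)/(x-\omega_j)$). Let $0\le\mu\le m$ be an integer and define $$\mathbf{S}_1(x)=\sum_{j=0}^{2^m-1} r'_j\,\frac{s_\mu(x)-s_\mu(\omega_j)}{x-\omega_j}.$$ Then $\mathbf{S}_1(x)$ is the quotient of $f(x)$ upon division by $X_{2^m-2^\mu}(x)$, i.e. $f(x)=\mathbf{S}_1(x)X_{2^m-2^\mu}(x)+\eta_1(x)$ for some $\eta_1(x)$ with $\deg\eta_1(x)<2^m-2^\mu=\deg X_{2^m-2^\mu}(x)$.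
   Context: Fix a basis $\{v_0,\dots,v_{m-1}\}$ of $GF(2^m)$ over $GF(2)$. For $0\le j<2^m$ with binary expansion $j=\sum_{i=0}^{m-1} j_i2^i$ ($j_i\in\{0,1\}$), set $\omega_j=\sum_{i=0}^{m-1} j_i v_i$; these are the $2^m$ distinct elements of $GF(2^m)$. For $0\le\tau\le m$ the subspace polynomial is $s_\tau(x)=\prod_{j=0}^{2^\tau-1}(x-\omega_j)$. For $0\le j<2^m$, $X_j(x)=s_0(x)^{j_0}s_1(x)^{j_1}\cdots s_{m-1}(x)^{j_{m-1}}$, a polynomial of degree $j$. The fraction $\frac{s_\mu(x)-s_\mu(a)}{x-a}$ denotes the exact polynomial quotient. *)

theory Defs
  imports "HOL-Computational_Algebra.Polynomial"
begin

definition is_GF2_basis :: "nat \<Rightarrow> (nat \<Rightarrow> 'a::field) \<Rightarrow> bool" where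
  "is_GF2_basis m v \<longleftrightarrow> (\<forall>x::'a. \<exists>!S. S \<subseteq> {..<m} \<and> x = (\<Sum>i\<in>S. v i))"

definition omega :: "nat \<Rightarrow> (nat \<Rightarrow> 'a::field) \<Rightarrow> nat \<Rightarrow> 'a" where
  "omega m v j = (\<Sum>i<m. if odd (j div 2 ^ i) then v i else 0)"

definition subspace_poly :: "nat \<Rightarrow> (nat \<Rightarrow> 'a::field) \<Rightarrow> nat \<Rightarrow> 'a poly" where
  "subspace_poly m v \<tau> = (\<Prod>j<2 ^ \<tau>. [:- omega m v j, 1:])"

definition Xpoly :: "nat \<Rightarrow> (nat \<Rightarrow> 'a::field) \<Rightarrow> nat \<Rightarrow> 'a poly" where
  "Xpoly m v j = (\<Prod>i<m. subspace_poly m v i ^ ((j div 2 ^ i) mod 2))"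

end

theory Submission
  imports Defs
begin

(* In characteristic 2 each subspace polynomial s_k is additive, so the splitting
   s_{k+1}(x) = s_k(x) s_k(x - v_k) becomes s_{k+1} = s_k (s_k - s_k(v_k)).  By induction,
   s_\<mu> X with X = s_\<mu> s_{\<mu>+1} ... s_{m-1} = X_{2^m-2^\<mu>} agrees with s_m = x^{2^m} - x
   up to terms of degree at most 2^m - 2^\<mu>.  Since s_m' = 1, s_m/(x - \<omega>_j) is the Lagrange
   polynomial of \<omega>_j, so f = \<Sum>_j r_j s_m/(x - \<omega>_j).  Multiplying
   s_m/(x - \<omega>_j) - X (s_\<mu> - s_\<mu>(\<omega>_j))/(x - \<omega>_j) by x - \<omega>_j gives
   s_m - s_\<mu> X + s_\<mu>(\<omega>_j) X, of degree at most 2^m - 2^\<mu>, so every summand of f - S_1 X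
   has degree below 2^m - 2^\<mu> = deg X. *)

unbundle bit_operations_syntax

lemma not_bit_if_less_exp:
  fixes j :: nat
  assumes "j < 2 ^ k" "k \<le> i"
  shows "\<not> bit j i"
  using assms by (metis bit_take_bit_iff not_less take_bit_nat_eq_self_iff)

lemma bit_add_exp_iff:
  fixes j :: nat
  assumes "j < 2 ^ k"
  shows "bit (j + 2 ^ k) i \<longleftrightarrow> i = k \<or> bit j i"
proof -
  have "j AND 2 ^ k = 0"
    using not_bit_if_less_exp[OF assms order.refl]
    by (intro bit_eqI) (auto simp: bit_and_iff bit_exp_iff)
  then show ?thesis
    by (auto simp: disjunctive_add_eq_or bit_or_iff bit_exp_iff)
qed

lemma bit_exp_diff_exp_iff:
  fixes m \<mu> :: nat
  assumes "\<mu> \<le> m"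
  shows "bit (2 ^ m - 2 ^ \<mu> :: nat) i \<longleftrightarrow> \<mu> \<le> i \<and> i < m"
proof -
  have "(2 ^ m - 2 ^ \<mu> :: nat) = push_bit \<mu> (mask (m - \<mu>))"
    using assms by (simp add: push_bit_eq_mult mask_eq_exp_minus_1 diff_mult_distrib
        flip: power_add)
  then show ?thesis
    using assms by (auto simp: bit_push_bit_iff bit_mask_iff)
qed

lemma sum_exp_atLeastLessThan:
  "\<mu> \<le> k \<Longrightarrow> (\<Sum>i\<in>{\<mu>..<k}. 2 ^ i :: nat) = 2 ^ k - 2 ^ \<mu>"
proof (induction k rule: dec_induct)
  case (step k)
  then show ?case by (simp add: power_increasing)
qed simp

lemma minus_eq_self_char2:
  fixes a :: "'a::ring_1"
  assumes "(2::'a) = 0"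
  shows "- a = a"
proof -
  have "a + a = 0"
    using assms by (metis mult_2 mult_zero_left)
  then show ?thesis
    by (simp add: minus_unique)
qed

lemma power2_add_char2:
  fixes a b :: "'a::comm_ring_1"
  assumes "(2::'a) = 0"
  shows "(a + b) ^ 2 = a ^ 2 + b ^ 2"
proof -
  have "2 * a * b = 0"
    using assms by simp
  then show ?thesis
    by (simp add: power2_sum)
qed

lemma power_card_eq_self:
  fixes x :: "'a::{field,finite}"
  shows "x ^ card (UNIV :: 'a set) = x"
proof (cases "x = 0")
  case False
  let ?U = "UNIV - {0 :: 'a}"
  have "(\<Prod>y\<in>?U. x * y) = (\<Prod>y\<in>?U. y)"
    by (rule prod.reindex_bij_witness[of _ "\<lambda>y. y / x" "\<lambda>y. x * y"]) (use False in auto)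
  then have "x ^ card ?U = 1"
    by (simp add: prod.distrib)
  moreover have "Suc (card ?U) = card (UNIV :: 'a set)"
    by (simp add: card_Diff_singleton Suc_diff_Suc finite_UNIV_card_ge_0)
  ultimately show ?thesis
    by (metis mult.right_neutral power_Suc)
qed (simp add: finite_UNIV_card_ge_0)

lemma mult_div_root_factor:
  fixes p :: "'a::field poly"
  shows "[:- a, 1:] * ((p - [:poly p a:]) div [:- a, 1:]) = p - [:poly p a:]"
  by (rule dvd_mult_div_cancel) (simp add: dvd_iff_poly_eq_0)

lemma sum_eq_0_or_degree_less:
  assumes "\<And>x. x \<in> A \<Longrightarrow> f x = 0 \<or> degree (f x) < n"
  shows "sum f A = 0 \<or> degree (sum f A) < n"
proof (cases "n = 0")
  case True
  then show ?thesis
    using assms by simp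
next
  case False
  then show ?thesis
    using assms by (intro disjI2 degree_sum_less) fastforce+
qed

lemma poly_div_eqI:
  fixes f q X :: "'a::field poly"
  assumes "X \<noteq> 0" "f - q * X = 0 \<or> degree (f - q * X) < degree X"
  shows "f div X = q"
proof -
  have "(f - q * X) div X = 0"
    using assms(2) by (auto intro: div_poly_less)
  then show ?thesis
    using assms(1) by (simp add: poly_div_diff_left)
qed

lemma omega_eq_sum_bits: "omega m v j = (\<Sum>i\<in>{i\<in>{..<m}. bit j i}. v i)"
  unfolding omega_def bit_iff_odd by (rule sum.inter_filter[symmetric]) simp

lemma omega_0 [simp]: "omega m v 0 = 0"
  by (simp add: omega_def)

lemma omega_add_exp:
  assumes "j < 2 ^ k" "k < m"
  shows "omega m v (j + 2 ^ k) = omega m v j + v k"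
proof -
  have "(if bit (j + 2 ^ k) i then v i else 0) =
      (if bit j i then v i else 0) + (if i = k then v k else 0)" for i
    using bit_add_exp_iff[OF assms(1)] not_bit_if_less_exp[OF assms(1) order.refl] by auto
  then show ?thesis
    using assms(2) by (simp add: omega_def sum.distrib flip: bit_iff_odd)
qed

lemma inj_on_omega:
  assumes "is_GF2_basis m v"
  shows "inj_on (omega m v) {..<2 ^ m}"
proof (rule inj_onI)
  fix j j' assume j: "j \<in> {..<2 ^ m}" and j': "j' \<in> {..<2 ^ m}"
    and eq: "omega m v j = omega m v j'"
  have "{i\<in>{..<m}. bit j i} = {i\<in>{..<m}. bit j' i}"
    using assms eq unfolding is_GF2_basis_def omega_eq_sum_bits
    by (metis (no_types, lifting) mem_Collect_eq subsetI)
  then show "j = j'"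
    using j j' not_bit_if_less_exp[of j m] not_bit_if_less_exp[of j' m]
    by (intro bit_eqI) (metis (no_types, lifting) lessThan_iff mem_Collect_eq not_le)
qed

lemma omega_image:
  fixes v :: "nat \<Rightarrow> 'a::{field,finite}"
  assumes "card (UNIV :: 'a set) = 2 ^ m" "is_GF2_basis m v"
  shows "omega m v ` {..<2 ^ m} = UNIV"
  using assms card_image[OF inj_on_omega[OF assms(2)]] by (intro card_subset_eq) auto

lemma poly_subspace_poly: "poly (subspace_poly m v k) x = (\<Prod>j<2 ^ k. x - omega m v j)"
  by (simp add: subspace_poly_def poly_prod)

lemma degree_subspace_poly [simp]: "degree (subspace_poly m v k) = 2 ^ k"
  unfolding subspace_poly_def by (subst degree_prod_eq_sum_degree) auto

lemma lead_coeff_subspace_poly [simp]: "lead_coeff (subspace_poly m v k) = 1"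
  by (simp add: subspace_poly_def lead_coeff_prod)

lemma subspace_poly_nonzero [simp]: "subspace_poly m v k \<noteq> 0"
  by (simp add: subspace_poly_def)

lemma subspace_poly_Suc:
  assumes "k < m"
  shows "subspace_poly m v (Suc k) =
    subspace_poly m v k * (\<Prod>j<2 ^ k. [:- (omega m v j + v k), 1:])"
proof -
  have "subspace_poly m v (Suc k) =
      (\<Prod>j<2 ^ k. [:- omega m v j, 1:]) * (\<Prod>j<2 ^ k. [:- omega m v (j + 2 ^ k), 1:])"
    unfolding subspace_poly_def lessThan_atLeast0
    using prod.atLeastLessThan_concat[of 0 "2 ^ k" "2 ^ k + 2 ^ k" "\<lambda>j. [:- omega m v j, 1:]"]
      prod.shift_bounds_nat_ivl[of "\<lambda>j. [:- omega m v j, 1:]" 0 "2 ^ k" "2 ^ k"]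
    by (simp add: mult_2)
  also have "(\<Prod>j<2 ^ k. [:- omega m v (j + 2 ^ k), 1:]) =
      (\<Prod>j<2 ^ k. [:- (omega m v j + v k), 1:])"
    using assms by (intro prod.cong) (auto simp: omega_add_exp)
  finally show ?thesis by (simp add: subspace_poly_def)
qed

lemma Xpoly_exp_diff_exp:
  assumes "\<mu> \<le> m"
  shows "Xpoly m v (2 ^ m - 2 ^ \<mu>) = (\<Prod>i\<in>{\<mu>..<m}. subspace_poly m v i)"
proof -
  have "Xpoly m v (2 ^ m - 2 ^ \<mu>) = (\<Prod>i<m. if \<mu> \<le> i then subspace_poly m v i else 1)"
    unfolding Xpoly_def
    by (intro prod.cong) (auto simp: mod_2_eq_odd bit_exp_diff_exp_iff[OF assms] simp flip: bit_iff_odd)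
  also have "\<dots> = (\<Prod>i\<in>{\<mu>..<m}. subspace_poly m v i)"
    by (simp add: prod.If_cases Int_def atLeastLessThan_def conj_commute)
  finally show ?thesis .
qed

lemma degree_prod_subspace_poly:
  "\<mu> \<le> m \<Longrightarrow> degree (\<Prod>i\<in>{\<mu>..<m}. subspace_poly m v i) = 2 ^ m - 2 ^ \<mu>"
  by (simp add: degree_prod_eq_sum_degree sum_exp_atLeastLessThan)

locale subspace_polys_char2 =
  fixes m :: nat and v :: "nat \<Rightarrow> 'a::{field,finite}"
  assumes char2: "(2::'a) = 0"
    and card: "card (UNIV :: 'a set) = 2 ^ m"
begin

abbreviation s where "s \<equiv> subspace_poly m v"
abbreviation w where "w \<equiv> omega m v"

lemma diff_eq_add: "a - b = (a :: 'a) + b"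
  using minus_eq_self_char2[OF char2, of b] by simp

lemma poly_eqI_degree_less:
  fixes p q :: "'a poly"
  assumes "\<And>x. poly p x = poly q x" "degree p < 2 ^ m" "degree q < 2 ^ m"
  shows "p = q"
  using assms card by (intro poly_eqI_degree[of UNIV]) auto

lemma prod_shifted_root_factors:
  assumes "k < m" and additive: "\<And>x y. poly (s k) (x + y) = poly (s k) x + poly (s k) y"
  shows "(\<Prod>j<2 ^ k. [:- (w j + v k), 1:]) = s k - [:poly (s k) (v k):]"
proof (rule poly_eqI_degree_less)
  fix x
  have "poly (\<Prod>j<2 ^ k. [:- (w j + v k), 1:]) x = poly (s k) (x + v k)"
    by (simp add: poly_prod poly_subspace_poly diff_eq_add algebra_simps)
  then show "poly (\<Prod>j<2 ^ k. [:- (w j + v k), 1:]) x = poly (s k - [:poly (s k) (v k):]) x"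
    by (simp add: additive diff_eq_add)
  have "(2::nat) ^ k < 2 ^ m"
    using assms(1) by simp
  moreover have "degree (s k - [:poly (s k) (v k):]) \<le> 2 ^ k"
    by (rule degree_diff_le) auto
  moreover have "degree (\<Prod>j<2 ^ k. [:- (w j + v k), 1:]) \<le> 2 ^ k"
    using degree_prod_sum_le[of "{..<2 ^ k}" "\<lambda>j. [:- (w j + v k), 1:]"] by simp
  ultimately show "degree (\<Prod>j<2 ^ k. [:- (w j + v k), 1:]) < 2 ^ m"
    and "degree (s k - [:poly (s k) (v k):]) < 2 ^ m"
    by linarith+
qed

lemma poly_subspace_poly_add:
  "k \<le> m \<Longrightarrow> poly (s k) (x + y) = poly (s k) x + poly (s k) y"
proof (induction k arbitrary: x y)
  case 0
  then show ?case by (simp add: subspace_poly_def)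
next
  case (Suc k)
  let ?p = "poly (s k)"
  have "k < m"
    using Suc.prems by simp
  then have rec: "s (Suc k) = s k * (s k - [:?p (v k):])"
    unfolding subspace_poly_Suc[OF \<open>k < m\<close>]
    by (subst prod_shifted_root_factors) (use Suc in auto)
  have add: "?p (x + y) = ?p x + ?p y" for x y
    using Suc by simp
  have val: "poly (s (Suc k)) z = ?p z ^ 2 + ?p z * ?p (v k)" for z
    unfolding rec by (simp add: diff_eq_add power2_eq_square distrib_left)
  show ?case
    unfolding val add by (simp add: power2_add_char2[OF char2] algebra_simps)
qed

lemma subspace_poly_Suc_eq:
  assumes "k < m"
  shows "s (Suc k) = s k * (s k - [:poly (s k) (v k):])"
  unfolding subspace_poly_Suc[OF assms]
  by (subst prod_shifted_root_factors) (use assms poly_subspace_poly_add in auto)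

lemma degree_prod_subspace_poly_diff_le:
  assumes "\<mu> \<le> k" "k \<le> m"
  shows "degree (s \<mu> * (\<Prod>i\<in>{\<mu>..<k}. s i) - s k) \<le> 2 ^ k - 2 ^ \<mu>"
  using assms
proof (induction k rule: dec_induct)
  case (step k)
  let ?e = "s \<mu> * (\<Prod>i\<in>{\<mu>..<k}. s i) - s k"
  let ?c = "poly (s k) (v k)"
  have IH: "degree ?e \<le> 2 ^ k - 2 ^ \<mu>"
    using step by simp
  have "(2::nat) ^ \<mu> \<le> 2 ^ k"
    using step(1) by simp
  moreover have "degree (?e * s k) \<le> degree ?e + 2 ^ k"
    by (metis degree_mult_le degree_subspace_poly)
  moreover have "degree (smult ?c (s k)) \<le> 2 ^ k"
    by (metis degree_smult_le degree_subspace_poly)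
  ultimately have "degree (?e * s k) \<le> 2 ^ Suc k - 2 ^ \<mu>"
    and "degree (smult ?c (s k)) \<le> 2 ^ Suc k - 2 ^ \<mu>"
    using IH by (simp_all only: power_Suc)
  moreover have "s \<mu> * (\<Prod>i\<in>{\<mu>..<Suc k}. s i) - s (Suc k) = ?e * s k + smult ?c (s k)"
    using step by (simp add: subspace_poly_Suc_eq prod.atLeastLessThan_Suc algebra_simps)
  ultimately show ?case
    by (simp add: degree_add_le)
qed simp

end

locale GF2_basis = subspace_polys_char2 +
  assumes basis: "is_GF2_basis m v"
begin

lemma omega_surj: "\<exists>j<2 ^ m. x = w j"
  using omega_image[OF card basis] by (metis UNIV_I imageE lessThan_iff)

lemma exp_ge_2: "2 \<le> (2::nat) ^ m"
proof -
  have "card {0::'a, 1} \<le> card (UNIV :: 'a set)"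
    by (rule card_mono) auto
  then show ?thesis
    using card by simp
qed

lemma subspace_poly_top: "s m = monom 1 (2 ^ m) - [:0, 1:]"
proof (rule poly_eqI_degree_lead_coeff[where n = "2 ^ m" and A = UNIV])
  fix x
  obtain j where "j < 2 ^ m" "x = w j"
    using omega_surj by blast
  then have "poly (s m) x = 0"
    by (auto simp: poly_subspace_poly)
  moreover have "x ^ 2 ^ m = x"
    using power_card_eq_self[of x] card by simp
  ultimately show "poly (s m) x = poly (monom 1 (2 ^ m) - [:0, 1:]) x"
    by (simp add: poly_monom)
  have "coeff [:0, 1:] (2 ^ m) = (0 :: 'a)"
    using exp_ge_2 by (simp add: coeff_eq_0)
  then show "coeff (s m) (2 ^ m) = coeff (monom 1 (2 ^ m) - [:0, 1:]) (2 ^ m)"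
    using lead_coeff_subspace_poly[of m v m] by simp
qed (use card exp_ge_2 in \<open>auto intro: degree_diff_le simp: degree_monom_eq\<close>)

lemma pderiv_subspace_poly_top: "pderiv (s m) = 1"
proof -
  have "m \<noteq> 0"
    using exp_ge_2 by (cases m) auto
  then have "(of_nat (2 ^ m) :: 'a) = 0"
    using char2 by simp
  then have "pderiv (s m) = - 1"
    by (simp add: subspace_poly_top pderiv_monom pderiv_diff pderiv_pCons zero_power one_pCons)
  also have "\<dots> = 1"
    by (simp add: one_pCons minus_eq_self_char2[OF char2])
  finally show ?thesis .
qed

definition lagrange_poly :: "nat \<Rightarrow> 'a poly" where
  "lagrange_poly j = (\<Prod>i\<in>{..<2 ^ m} - {j}. [:- w i, 1:])"

lemma subspace_poly_top_eq_mult: "j < 2 ^ m \<Longrightarrow> s m = [:- w j, 1:] * lagrange_poly j"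
  by (simp add: subspace_poly_def lagrange_poly_def prod.remove)

lemma degree_lagrange_poly: "j < 2 ^ m \<Longrightarrow> degree (lagrange_poly j) < 2 ^ m"
  by (simp add: lagrange_poly_def degree_prod_eq_sum_degree card_Diff_singleton)

lemma poly_lagrange_poly:
  assumes "i < 2 ^ m" "j < 2 ^ m"
  shows "poly (lagrange_poly j) (w i) = (if i = j then 1 else 0)"
proof (cases "i = j")
  case True
  have "pderiv [:- w j, 1:] = 1"
    by (simp add: pderiv_pCons)
  then have "poly (pderiv (s m)) (w j) = poly (lagrange_poly j) (w j)"
    unfolding subspace_poly_top_eq_mult[OF assms(2)] pderiv_mult by simp
  then show ?thesis
    using True by (simp add: pderiv_subspace_poly_top)
next
  case False
  then show ?thesis
    using assms by (auto simp: lagrange_poly_def poly_prod prod_zero_iff)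
qed

lemma interpolation:
  assumes "degree f < 2 ^ m"
  shows "f = (\<Sum>j<2 ^ m. smult (poly f (w j)) (lagrange_poly j))"
proof (rule poly_eqI_degree_less)
  fix x
  obtain i where i: "i < 2 ^ m" "x = w i"
    using omega_surj by blast
  then show "poly f x = poly (\<Sum>j<2 ^ m. smult (poly f (w j)) (lagrange_poly j)) x"
    by (simp add: poly_sum poly_lagrange_poly if_distrib cong: if_cong)
  show "degree (\<Sum>j<2 ^ m. smult (poly f (w j)) (lagrange_poly j)) < 2 ^ m"
    by (intro degree_sum_less) (auto intro: le_less_trans[OF degree_smult_le] degree_lagrange_poly)
qed (fact assms)

lemma lagrange_poly_minus_quotient:
  assumes "j < 2 ^ m" "\<mu> \<le> m"
  defines "X \<equiv> \<Prod>i\<in>{\<mu>..<m}. s i"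
  shows "lagrange_poly j - (s \<mu> - [:poly (s \<mu>) (w j):]) div [:- w j, 1:] * X = 0 \<or>
    degree (lagrange_poly j - (s \<mu> - [:poly (s \<mu>) (w j):]) div [:- w j, 1:] * X)
      < 2 ^ m - 2 ^ \<mu>"
    (is "?M = 0 \<or> degree ?M < _")
proof -
  let ?c = "poly (s \<mu>) (w j)"
  have "[:- w j, 1:] * ?M = [:- w j, 1:] * lagrange_poly j -
      [:- w j, 1:] * ((s \<mu> - [:?c:]) div [:- w j, 1:]) * X"
    by (simp only: right_diff_distrib mult.assoc)
  also have "\<dots> = s m - (s \<mu> - [:?c:]) * X"
    by (simp only: subspace_poly_top_eq_mult[OF assms(1)] mult_div_root_factor)
  also have "\<dots> = smult ?c X - (s \<mu> * X - s m)"
    by (simp add: algebra_simps)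
  finally have factor: "[:- w j, 1:] * ?M = smult ?c X - (s \<mu> * X - s m)" .
  have "degree X = 2 ^ m - 2 ^ \<mu>"
    unfolding X_def by (rule degree_prod_subspace_poly[OF assms(2)])
  then have "degree (smult ?c X) \<le> 2 ^ m - 2 ^ \<mu>"
    using degree_smult_le[of ?c X] by simp
  moreover have "degree (s \<mu> * X - s m) \<le> 2 ^ m - 2 ^ \<mu>"
    unfolding X_def by (rule degree_prod_subspace_poly_diff_le[OF assms(2) order.refl])
  ultimately have small: "degree ([:- w j, 1:] * ?M) \<le> 2 ^ m - 2 ^ \<mu>"
    unfolding factor by (rule degree_diff_le)
  show ?thesis
  proof (cases "?M = 0")
    case False
    then have "degree ([:- w j, 1:] * ?M) = Suc (degree ?M)"
      by (subst degree_mult_eq) auto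
    then show ?thesis
      using small by simp
  qed simp
qed

end

theorem lemma2:
  fixes m \<mu> :: nat and v :: "nat \<Rightarrow> 'a::{field,finite}"
    and r :: "nat \<Rightarrow> 'a" and f :: "'a poly"
  assumes char2: "(2::'a) = 0"
    and card: "card (UNIV :: 'a set) = 2 ^ m"
    and basis: "is_GF2_basis m v"
    and f_deg: "degree f < 2 ^ m"
    and f_interp: "\<forall>j<2 ^ m. poly f (omega m v j) = r j"
    and mu: "\<mu> \<le> m"
  shows "let S1 = (\<Sum>j<2 ^ m. smult (r j)
                 ((subspace_poly m v \<mu> - [:poly (subspace_poly m v \<mu>) (omega m v j):])
                   div [:- omega m v j, 1:]));
             X = Xpoly m v (2 ^ m - 2 ^ \<mu>)
         in f div X = S1 \<and>
            (\<exists>\<eta>. f = S1 * X + \<eta> \<and> (\<eta> = 0 \<or> degree \<eta> < 2 ^ m - 2 ^ \<mu>))"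
proof -
  interpret GF2_basis m v
    using char2 card basis by unfold_locales
  define X where "X = (\<Prod>i\<in>{\<mu>..<m}. subspace_poly m v i)"
  define Q where "Q j = (subspace_poly m v \<mu> - [:poly (subspace_poly m v \<mu>) (omega m v j):])
    div [:- omega m v j, 1:]" for j
  define S1 where "S1 = (\<Sum>j<2 ^ m. smult (r j) (Q j))"
  have "f = (\<Sum>j<2 ^ m. smult (r j) (lagrange_poly j))"
    using interpolation[OF f_deg] f_interp by simp
  then have "f - S1 * X = (\<Sum>j<2 ^ m. smult (r j) (lagrange_poly j - Q j * X))"
    by (simp add: S1_def sum_distrib_right smult_diff_right sum_subtractf)
  also have "\<dots> = 0 \<or> degree \<dots> < degree X"
    using lagrange_poly_minus_quotient[OF _ mu] degree_prod_subspace_poly[OF mu, of v]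
    by (intro sum_eq_0_or_degree_less) (auto simp: X_def Q_def)
  finally have remainder: "f - S1 * X = 0 \<or> degree (f - S1 * X) < degree X" .
  have "X \<noteq> 0"
    by (simp add: X_def)
  then have "f div X = S1"
    using remainder by (rule poly_div_eqI)
  then show ?thesis
    unfolding Let_def Xpoly_exp_diff_exp[OF mu] X_def[symmetric] S1_def[symmetric] Q_def[symmetric]
    using remainder degree_prod_subspace_poly[OF mu, of v]
    by (intro conjI exI[of _ "f - S1 * X"]) (auto simp: X_def)
qed

end
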